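(* Let $p$ be a prime and $m,k$ positive integers with $k\mid p^m-1$, and set $u=\frac{p^m-1}{k}$. Assume $u$ is a primitive divisor of $p^m-1$ and $u=b(p^{a}-1)$ with integers $a\ge1$, $b>1$, $m=ab$. Let $\omega$ be a primitive element of $\mathbb{F}_{p^m}$ and, for $x\in\mathbb{F}_{p^m}$, write $x=\sum_{i=0}^{b-1}c_i\omega^{ik}$ with $c_i\in\mathbb{F}_{p^a}$ and $[x]=(c_0,\ldots,c_{b-1})\in\mathbb{F}_{p^a}^b$, with $[x]_i:=c_{i-1}$ for $i=1,\ldots,b$. Then for all $x,y\in\mathbb{F}_{p^m}$ and every integer $r\ge0$, $$w_{\Gamma(k,p^m)}(r,x,y)=w_{H(b,p^{a})}(r,[x],[y])=\sum_{\substack{r_1+\cdots+r_b=r\\ r_i\ge0}} \frac{r!}{r_{1}!\cdots r_{b}!}\prod_{i=1}^b a_{i}(x,y),$$ where $$a_{i}(x,y)=\begin{cases}\frac{p^{a}-1}{p^{a}}\big((p^{a}-1)^{r_i-1}-(-1)^{r_i-1}\big) & \text{if } [x]_i=[y]_i,\\[1mm] \frac{1}{p^{a}}\big((p^{a}-1)^{r_i}-(-1)^{r_i}\big) & \text{if } [x]_i\neq[y]_i.\end{cases}$$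
   Context: For $k\mid p^m-1$, the generalized Paley graph $\Gamma(k,p^m)$ has vertex set $\mathbb{F}_{p^m}$, with $x,y$ adjacent iff $y-x\in R_k=\{z^k:z\in\mathbb{F}_{p^m}^*\}$. A divisor $u$ of $p^m-1$ is primitive if $u\nmid p^h-1$ for all $1\le h<m$. Under the hypotheses, $\{1,\omega^k,\omega^{2k},\ldots,\omega^{(b-1)k}\}$ is a basis of $\mathbb{F}_{p^m}$ over $\mathbb{F}_{p^a}$. The Hamming graph $H(b,q)$ has as vertices the $b$-tuples over a set of size $q$ (here $\mathbb{F}_{p^a}$), two tuples adjacent iff they differ in exactly one entry. $w_G(r,v,w)$ is the number of walks of length $r$ from $v$ to $w$ in $G$, with $w_G(0,v,w)=1$ if $v=w$ and $0$ otherwise. *)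

theory Defs
  imports Complex_Main "HOL-Computational_Algebra.Primes"
begin

definition walk_count :: "'v set \<Rightarrow> ('v \<Rightarrow> 'v \<Rightarrow> bool) \<Rightarrow> nat \<Rightarrow> 'v \<Rightarrow> 'v \<Rightarrow> nat" where
  "walk_count V E r v w = card {vs. length vs = Suc r \<and> set vs \<subseteq> V \<and> vs ! 0 = v \<and> vs ! r = w
      \<and> (\<forall>i<r. E (vs ! i) (vs ! Suc i))}"

definition kth_powers :: "nat \<Rightarrow> 'a::field set" where
  "kth_powers k = {z ^ k | z. z \<noteq> 0}"

text \<open>Generalized Paley graph: vertex set the whole finite field.\<close>
definition paley_adj :: "nat \<Rightarrow> 'a::field \<Rightarrow> 'a \<Rightarrow> bool" where
  "paley_adj k x y \<longleftrightarrow> y - x \<in> kth_powers k"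

text \<open>The subfield with q elements, q = p^a, inside the field of order p^m.\<close>
definition subfield_q :: "nat \<Rightarrow> 'a::field set" where
  "subfield_q q = {c. c ^ q = c}"

definition hamming_vertices :: "nat \<Rightarrow> 'a set \<Rightarrow> 'a list set" where
  "hamming_vertices b F = {cs. length cs = b \<and> set cs \<subseteq> F}"

definition hamming_adj :: "nat \<Rightarrow> 'a list \<Rightarrow> 'a list \<Rightarrow> bool" where
  "hamming_adj b cs ds \<longleftrightarrow> card {i. i < b \<and> cs ! i \<noteq> ds ! i} = 1"

definition coords :: "nat \<Rightarrow> nat \<Rightarrow> nat \<Rightarrow> 'a::field \<Rightarrow> 'a \<Rightarrow> 'a list" where
  "coords q b k \<omega> x = (THE cs. length cs = b \<and> set cs \<subseteq> subfield_q q
      \<and> x = (\<Sum>i<b. cs ! i * \<omega> ^ (i * k)))"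

definition primitive_divisor :: "nat \<Rightarrow> nat \<Rightarrow> nat \<Rightarrow> bool" where
  "primitive_divisor p m u \<longleftrightarrow> u dvd p ^ m - 1 \<and> (\<forall>h. 1 \<le> h \<and> h < m \<longrightarrow> \<not> u dvd p ^ h - 1)"

definition primitive_element :: "'a::{field,finite} \<Rightarrow> bool" where
  "primitive_element \<omega> \<longleftrightarrow> \<omega> \<noteq> 0 \<and> (\<forall>x. x \<noteq> 0 \<longrightarrow> (\<exists>n. x = \<omega> ^ n))"

text \<open>The factor a_i(x,y); exponents may be -1 (when r_i = 0), hence powi.\<close>
definition a_factor :: "nat \<Rightarrow> bool \<Rightarrow> nat \<Rightarrow> real" where
  "a_factor q eq ri = (if eq
     then (real q - 1) / real q * ((real q - 1) powi (int ri - 1) - (-1) powi (int ri - 1))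
     else 1 / real q * ((real q - 1) ^ ri - (-1) ^ ri))"

end

theory Submission
  imports Defs "HOL-Number_Theory.Residues" "HOL-Computational_Algebra.Polynomial"
begin

text \<open>
  Write \<open>q = p\<^sup>a\<close> and \<open>\<beta> = \<omega>\<^sup>k\<close>. The primitive-divisor hypothesis makes the Frobenius
  conjugates \<open>\<beta>\<^bsup>q\<^sup>t\<^esup>\<close>, \<open>t < b\<close>, pairwise distinct, so no nonzero polynomial over \<open>F\<^sub>q\<close> of
  degree \<open>< b\<close> vanishes at \<open>\<beta>\<close>: the powers \<open>1, \<beta>, \<dots>, \<beta>\<^bsup>b-1\<^esup>\<close> are independent over \<open>F\<^sub>q\<close>,
  hence a basis by counting. The nonzero elements of \<open>F\<^sub>q\<close> are the powers \<open>\<beta>\<^bsup>bs\<^esup>\<close>, so the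
  \<open>k\<close>-th powers \<open>\<beta>\<^sup>n\<close> are exactly the elements \<open>c \<beta>\<^sup>i\<close> with \<open>c \<in> F\<^sub>q\<^sup>*\<close>, \<open>i < b\<close>: the vectors
  with exactly one nonzero coordinate. Thus \<open>x \<mapsto> [x]\<close> is an isomorphism onto \<open>H(b,q)\<close>.
  Finally \<open>H(b,q)\<close> is the Cartesian product of \<open>b\<close> copies of the complete graph \<open>K\<^sub>q\<close>, whose
  walk numbers are the \<open>a\<^sub>i\<close>; a walk in the product is a shuffle of walks in the factors,
  which gives the multinomial sum.
\<close>

section \<open>Counting walks\<close>

definition walks :: "'v set \<Rightarrow> ('v \<Rightarrow> 'v \<Rightarrow> bool) \<Rightarrow> nat \<Rightarrow> 'v \<Rightarrow> 'v \<Rightarrow> 'v list set" where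
  "walks V E r v w = {vs. length vs = Suc r \<and> set vs \<subseteq> V \<and> vs ! 0 = v \<and> vs ! r = w
      \<and> (\<forall>i<r. E (vs ! i) (vs ! Suc i))}"

lemma walk_count_eq_card_walks: "walk_count V E r v w = card (walks V E r v w)"
  by (simp add: walk_count_def walks_def)

lemma walks_0: "walks V E 0 v w = (if v = w \<and> v \<in> V then {[v]} else {})"
  by (auto simp: walks_def length_Suc_conv)

lemma walks_Suc:
  assumes "v \<in> V"
  shows "walks V E (Suc r) v w = (\<Union>z\<in>{z\<in>V. E v z}. (#) v ` walks V E r z w)"
proof
  show "walks V E (Suc r) v w \<subseteq> (\<Union>z\<in>{z\<in>V. E v z}. (#) v ` walks V E r z w)"
  proof
    fix vs assume "vs \<in> walks V E (Suc r) v w"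
    then obtain t where "vs = v # t" "t \<in> walks V E r (t ! 0) w" "E v (t ! 0)"
      by (cases vs) (auto simp: walks_def All_less_Suc2)
    moreover from this have "t ! 0 \<in> V" by (auto simp: walks_def)
    ultimately show "vs \<in> (\<Union>z\<in>{z\<in>V. E v z}. (#) v ` walks V E r z w)" by blast
  qed
  show "(\<Union>z\<in>{z\<in>V. E v z}. (#) v ` walks V E r z w) \<subseteq> walks V E (Suc r) v w"
    using assms by (auto simp: walks_def All_less_Suc2)
qed

lemma finite_walks: "finite V \<Longrightarrow> finite (walks V E r v w)"
  by (rule finite_subset[OF _ finite_lists_length_eq[of V "Suc r"]]) (auto simp: walks_def)

lemma walk_count_0: "walk_count V E 0 v w = (if v = w \<and> v \<in> V then 1 else 0)"
  by (auto simp: walk_count_eq_card_walks walks_0)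

lemma walk_count_Suc:
  assumes "finite V" "v \<in> V"
  shows "walk_count V E (Suc r) v w = (\<Sum>z\<in>{z\<in>V. E v z}. walk_count V E r z w)"
proof -
  have "walk_count V E (Suc r) v w = card (\<Union>z\<in>{z\<in>V. E v z}. (#) v ` walks V E r z w)"
    by (simp add: walk_count_eq_card_walks walks_Suc[OF assms(2)])
  also have "\<dots> = (\<Sum>z\<in>{z\<in>V. E v z}. card ((#) v ` walks V E r z w))"
    using assms(1) by (intro card_UN_disjoint) (auto simp: finite_walks, auto simp: walks_def)
  also have "\<dots> = (\<Sum>z\<in>{z\<in>V. E v z}. walk_count V E r z w)"
    by (simp add: card_image walk_count_eq_card_walks)
  finally show ?thesis .
qed

lemma walk_count_bij_betw:
  assumes "finite V" and bij: "bij_betw f V V'"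
    and adj: "\<And>x y. x \<in> V \<Longrightarrow> y \<in> V \<Longrightarrow> E' (f x) (f y) \<longleftrightarrow> E x y"
    and "v \<in> V" "w \<in> V"
  shows "walk_count V' E' r (f v) (f w) = walk_count V E r v w"
  using \<open>v \<in> V\<close>
proof (induction r arbitrary: v)
  case 0
  then show ?case
    using bij \<open>w \<in> V\<close> by (auto simp: walk_count_0 bij_betw_def inj_on_eq_iff)
next
  case (Suc r)
  have "f ` {z \<in> V. E v z} = {z \<in> V'. E' (f v) z}"
    using bij adj Suc.prems by (auto simp: bij_betw_def)
  then have nbrs: "bij_betw f {z \<in> V. E v z} {z \<in> V'. E' (f v) z}"
    using bij by (auto simp: bij_betw_def intro: inj_on_subset)
  have "walk_count V' E' (Suc r) (f v) (f w) = (\<Sum>z\<in>{z \<in> V'. E' (f v) z}. walk_count V' E' r z (f w))"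
    using bij Suc.prems \<open>finite V\<close> by (intro walk_count_Suc) (auto simp: bij_betw_def)
  also have "\<dots> = (\<Sum>z\<in>{z \<in> V. E v z}. walk_count V' E' r (f z) (f w))"
    by (rule sum.reindex_bij_betw[OF nbrs, symmetric])
  also have "\<dots> = (\<Sum>z\<in>{z \<in> V. E v z}. walk_count V E r z w)"
    by (intro sum.cong refl) (auto intro: Suc.IH)
  also have "\<dots> = walk_count V E (Suc r) v w"
    using \<open>finite V\<close> Suc.prems by (rule walk_count_Suc[symmetric])
  finally show ?case .
qed

section \<open>Walks in Hamming graphs\<close>

lemma finite_hamming_vertices: "finite F \<Longrightarrow> finite (hamming_vertices n F)"
  using finite_lists_length_eq[of F n] by (simp add: hamming_vertices_def conj_commute)

lemma card_hamming_vertices: "finite F \<Longrightarrow> card (hamming_vertices n F) = card F ^ n"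
  using card_lists_length_eq[of F n] by (simp add: hamming_vertices_def conj_commute)

lemma hamming_vertices_nth: "cs \<in> hamming_vertices n F \<Longrightarrow> j < n \<Longrightarrow> cs ! j \<in> F"
  by (auto simp: hamming_vertices_def)

lemma card_nth_neq_Cons:
  "card {i. i < Suc n \<and> (x # xs) ! i \<noteq> (z # zs) ! i}
     = (if x = z then 0 else 1) + card {i. i < n \<and> xs ! i \<noteq> zs ! i}"
proof -
  have "{i. i < Suc n \<and> (x # xs) ! i \<noteq> (z # zs) ! i}
      = (if x = z then {} else {0}) \<union> Suc ` {i. i < n \<and> xs ! i \<noteq> zs ! i}"
    by (auto simp: less_Suc_eq_0_disj)
  then show ?thesis by (simp add: card_image)
qed

lemma hamming_adj_Cons:
  assumes "length xs = n" "length zs = n"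
  shows "hamming_adj (Suc n) (x # xs) (z # zs) \<longleftrightarrow>
           (x \<noteq> z \<and> xs = zs) \<or> (x = z \<and> hamming_adj n xs zs)"
proof -
  have "card {i. i < n \<and> xs ! i \<noteq> zs ! i} = 0 \<longleftrightarrow> xs = zs"
    using assms by (auto simp: list_eq_iff_nth_eq)
  then show ?thesis by (auto simp: hamming_adj_def card_nth_neq_Cons)
qed

lemma hamming_adj_iff_single_difference:
  fixes xs ys :: "'a::ab_group_add list"
  assumes "length xs = n" "length ys = n"
  shows "hamming_adj n xs ys \<longleftrightarrow>
           (\<exists>i<n. \<exists>c\<noteq>0. \<forall>j<n. ys ! j - xs ! j = (if j = i then c else 0))"
proof -
  have "hamming_adj n xs ys \<longleftrightarrow> (\<exists>i. {j. j < n \<and> xs ! j \<noteq> ys ! j} = {i})"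
    by (simp add: hamming_adj_def card_1_singleton_iff)
  also have "\<dots> \<longleftrightarrow> (\<exists>i<n. \<exists>c\<noteq>0. \<forall>j<n. ys ! j - xs ! j = (if j = i then c else 0))"
  proof
    assume "\<exists>i. {j. j < n \<and> xs ! j \<noteq> ys ! j} = {i}"
    then obtain i where i: "{j. j < n \<and> xs ! j \<noteq> ys ! j} = {i}" ..
    then have "i \<in> {j. j < n \<and> xs ! j \<noteq> ys ! j}" by simp
    then have "i < n" "ys ! i - xs ! i \<noteq> 0" by auto
    moreover have "ys ! j - xs ! j = 0" if "j < n" "j \<noteq> i" for j
    proof -
      have "j \<notin> {j. j < n \<and> xs ! j \<noteq> ys ! j}" using i that by simp
      then show ?thesis using that by simp
    qed
    ultimately show "\<exists>i<n. \<exists>c\<noteq>0. \<forall>j<n. ys ! j - xs ! j = (if j = i then c else 0)"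
      by (metis (full_types))
  next
    assume "\<exists>i<n. \<exists>c\<noteq>0. \<forall>j<n. ys ! j - xs ! j = (if j = i then c else 0)"
    then obtain i c where "i < n" "c \<noteq> 0"
      and diff: "\<forall>j<n. ys ! j - xs ! j = (if j = i then c else 0)"
      by blast
    have "xs ! j \<noteq> ys ! j \<longleftrightarrow> j = i" if "j < n" for j
      using diff that \<open>c \<noteq> 0\<close> by (metis right_minus_eq)
    then have "{j. j < n \<and> xs ! j \<noteq> ys ! j} = {i}"
      using \<open>i < n\<close> by blast
    then show "\<exists>i. {j. j < n \<and> xs ! j \<noteq> ys ! j} = {i}" ..
  qed
  finally show ?thesis .
qed

definition hamming_neighbours :: "'a set \<Rightarrow> 'a list \<Rightarrow> 'a list set" where
  "hamming_neighbours F xs = {zs \<in> hamming_vertices (length xs) F. hamming_adj (length xs) xs zs}"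

lemma finite_hamming_neighbours: "finite F \<Longrightarrow> finite (hamming_neighbours F xs)"
  by (simp add: hamming_neighbours_def finite_hamming_vertices)

lemma hamming_neighbours_Nil: "hamming_neighbours F [] = {}"
  by (simp add: hamming_neighbours_def hamming_adj_def)

lemma hamming_neighbours_Cons:
  assumes "x \<in> F" "set xs \<subseteq> F"
  shows "hamming_neighbours F (x # xs)
           = (\<lambda>c. c # xs) ` (F - {x}) \<union> (#) x ` hamming_neighbours F xs"
  using assms
  by (auto simp: hamming_neighbours_def hamming_vertices_def length_Suc_conv hamming_adj_Cons)

lemma a_factor_True:
  assumes "q > 1"
  shows "a_factor q True j = ((real q - 1) ^ j + (real q - 1) * (-1) ^ j) / real q"
proof (cases j)
  case 0
  then show ?thesis using assms by (simp add: a_factor_def field_simps)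
next
  case (Suc i)
  then have "int j - 1 = int i" by simp
  then show ?thesis using Suc by (simp add: a_factor_def field_simps power_int_of_nat)
qed

lemma a_factor_False: "a_factor q False j = ((real q - 1) ^ j - (-1) ^ j) / real q"
  by (simp add: a_factor_def)

text \<open>This first-step recursion identifies \<open>a_factor q (x = y) j\<close> as the number of walks of
  length \<open>j\<close> from \<open>x\<close> to \<open>y\<close> in the complete graph on \<open>F\<close>.\<close>
lemma a_factor_Suc:
  assumes "finite F" "card F = q" "q > 1" "x \<in> F" "y \<in> F"
  shows "a_factor q (x = y) (Suc j) = (\<Sum>c\<in>F - {x}. a_factor q (c = y) j)"
proof (cases "x = y")
  case True
  have "(\<Sum>c\<in>F - {x}. a_factor q (c = y) j) = (\<Sum>c\<in>F - {x}. a_factor q False j)"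
    using True by (intro sum.cong) auto
  also have "\<dots> = (real q - 1) * a_factor q False j"
    using assms by (simp add: of_nat_diff)
  finally show ?thesis
    using True assms by (simp add: a_factor_True a_factor_False field_simps)
next
  case False
  have "card (F - {x} - {y}) = q - 2" "q \<ge> 2"
    using assms False by (auto simp: card_Diff_subset dest: card_le_Suc0_iff_eq[THEN iffD1, rotated])
  then have "(\<Sum>c\<in>F - {x} - {y}. a_factor q (c = y) j) = (real q - 2) * a_factor q False j"
    by (simp add: of_nat_diff)
  moreover have "(\<Sum>c\<in>F - {x}. a_factor q (c = y) j)
      = a_factor q True j + (\<Sum>c\<in>F - {x} - {y}. a_factor q (c = y) j)"
    using False assms by (subst sum.remove[of _ y]) auto
  ultimately have sum_eq: "(\<Sum>c\<in>F - {x}. a_factor q (c = y) j)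
      = a_factor q True j + (real q - 2) * a_factor q False j"
    by simp
  show ?thesis
    unfolding sum_eq using False assms by (simp add: a_factor_True a_factor_False field_simps)
qed

lemma binomial_convolution_Suc:
  fixes A B :: "nat \<Rightarrow> 'a::comm_semiring_1"
  shows "(\<Sum>j\<le>Suc r. of_nat (Suc r choose j) * A j * B (Suc r - j))
       = (\<Sum>j\<le>r. of_nat (r choose j) * A (Suc j) * B (r - j))
       + (\<Sum>j\<le>r. of_nat (r choose j) * A j * B (Suc (r - j)))"
proof -
  have "(\<Sum>j\<le>Suc r. of_nat (Suc r choose j) * A j * B (Suc r - j))
      = (\<Sum>j\<le>r. of_nat (r choose j) * A (Suc j) * B (r - j))
        + (A 0 * B (Suc r) + (\<Sum>j\<le>r. of_nat (r choose Suc j) * A (Suc j) * B (r - j)))"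
    by (subst sum.atMost_Suc_shift) (simp add: sum.distrib algebra_simps)
  also have "A 0 * B (Suc r) + (\<Sum>j\<le>r. of_nat (r choose Suc j) * A (Suc j) * B (r - j))
      = (\<Sum>j\<le>Suc r. of_nat (r choose j) * A j * B (Suc r - j))"
    by (subst sum.atMost_Suc_shift) simp
  also have "\<dots> = (\<Sum>j\<le>r. of_nat (r choose j) * A j * B (Suc (r - j)))"
    by (simp add: Suc_diff_le binomial_eq_0)
  finally show ?thesis .
qed

text \<open>Walks in the Cartesian product \<open>H(n,q) = K\<^sub>q \<box> H(n-1,q)\<close> are interleavings of a walk in
  the first factor with a walk in the second; the binomial coefficient counts the interleavings.
  The list \<open>es\<close> records which coordinates of the two end vertices agree.\<close>
fun hamming_walk_number :: "nat \<Rightarrow> bool list \<Rightarrow> nat \<Rightarrow> real" where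
  "hamming_walk_number q [] r = (if r = 0 then 1 else 0)"
| "hamming_walk_number q (e # es) r =
     (\<Sum>j\<le>r. real (r choose j) * a_factor q e j * hamming_walk_number q es (r - j))"

lemma hamming_walk_number_0:
  "q > 1 \<Longrightarrow> hamming_walk_number q es 0 = (if list_all id es then 1 else 0)"
  by (induction es) (auto simp: a_factor_True a_factor_False)

lemma hamming_walk_number_Suc:
  assumes F: "finite F" "card F = q" "q > 1"
    and xs: "set xs \<subseteq> F" and ys: "length ys = length xs" "set ys \<subseteq> F"
  shows "hamming_walk_number q (map2 (=) xs ys) (Suc r)
       = (\<Sum>zs\<in>hamming_neighbours F xs. hamming_walk_number q (map2 (=) zs ys) r)"
  using xs ys
proof (induction xs arbitrary: ys r)
  case Nil
  then show ?case by (simp add: hamming_neighbours_Nil)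
next
  case (Cons x xs)
  then obtain y ys' where ys: "ys = y # ys'" "length ys' = length xs" "set ys' \<subseteq> F"
    by (cases ys) auto
  have x: "x \<in> F" "set xs \<subseteq> F" and y: "y \<in> F" using Cons.prems ys by auto
  define A where "A j = a_factor q (x = y) j" for j
  define B where "B n = hamming_walk_number q (map2 (=) xs ys') n" for n
  let ?W = "\<lambda>zs. hamming_walk_number q (map2 (=) zs ys) r"
  have "hamming_walk_number q (map2 (=) (x # xs) ys) (Suc r)
      = (\<Sum>j\<le>Suc r. real (Suc r choose j) * A j * B (Suc r - j))"
    by (simp add: ys A_def B_def)
  also have "\<dots> = (\<Sum>j\<le>r. real (r choose j) * A (Suc j) * B (r - j))
       + (\<Sum>j\<le>r. real (r choose j) * A j * B (Suc (r - j)))"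
    by (rule binomial_convolution_Suc)
  also have "(\<Sum>j\<le>r. real (r choose j) * A (Suc j) * B (r - j)) = (\<Sum>c\<in>F - {x}. ?W (c # xs))"
  proof -
    have "(\<Sum>j\<le>r. real (r choose j) * A (Suc j) * B (r - j))
        = (\<Sum>j\<le>r. \<Sum>c\<in>F - {x}. real (r choose j) * a_factor q (c = y) j * B (r - j))"
      unfolding A_def a_factor_Suc[OF F x(1) y]
      by (simp add: sum_distrib_left sum_distrib_right mult.assoc)
    also have "\<dots> = (\<Sum>c\<in>F - {x}. ?W (c # xs))"
      by (subst sum.swap) (simp add: ys B_def)
    finally show ?thesis .
  qed
  also have "(\<Sum>j\<le>r. real (r choose j) * A j * B (Suc (r - j)))
      = (\<Sum>zs\<in>hamming_neighbours F xs. ?W (x # zs))"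
    unfolding B_def Cons.IH[OF x(2) ys(2,3)] sum_distrib_left
    by (subst sum.swap) (simp add: ys A_def mult.assoc)
  also have "(\<Sum>c\<in>F - {x}. ?W (c # xs)) + (\<Sum>zs\<in>hamming_neighbours F xs. ?W (x # zs))
      = (\<Sum>zs\<in>hamming_neighbours F (x # xs). ?W zs)"
    unfolding hamming_neighbours_Cons[OF x]
    using F(1) by (subst sum.union_disjoint) (auto simp: sum.reindex inj_on_def finite_hamming_neighbours)
  finally show ?case .
qed

lemma list_all_map2_eq_iff:
  "length xs = length ys \<Longrightarrow> list_all id (map2 (=) xs ys) \<longleftrightarrow> xs = ys"
  by (induction xs ys rule: list_induct2) auto

lemma walk_count_hamming:
  assumes F: "finite F" "card F = q" "q > 1"
    and xs: "xs \<in> hamming_vertices n F" and ys: "ys \<in> hamming_vertices n F"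
  shows "real (walk_count (hamming_vertices n F) (hamming_adj n) r xs ys)
       = hamming_walk_number q (map2 (=) xs ys) r"
  using xs
proof (induction r arbitrary: xs)
  case 0
  then show ?case
    using ys F(3) list_all_map2_eq_iff[of xs ys]
    by (simp add: walk_count_0 hamming_walk_number_0 hamming_vertices_def)
next
  case (Suc r)
  have nbrs: "{zs \<in> hamming_vertices n F. hamming_adj n xs zs} = hamming_neighbours F xs"
    using Suc.prems by (auto simp: hamming_neighbours_def hamming_vertices_def)
  have "real (walk_count (hamming_vertices n F) (hamming_adj n) (Suc r) xs ys)
      = (\<Sum>zs\<in>hamming_neighbours F xs. real (walk_count (hamming_vertices n F) (hamming_adj n) r zs ys))"
    using Suc.prems finite_hamming_vertices[OF F(1)] by (simp add: walk_count_Suc nbrs)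
  also have "\<dots> = (\<Sum>zs\<in>hamming_neighbours F xs. hamming_walk_number q (map2 (=) zs ys) r)"
    using Suc.prems by (intro sum.cong refl Suc.IH) (auto simp: hamming_neighbours_def hamming_vertices_def)
  also have "\<dots> = hamming_walk_number q (map2 (=) xs ys) (Suc r)"
    using Suc.prems ys
    by (intro hamming_walk_number_Suc[symmetric] F) (auto simp: hamming_vertices_def)
  finally show ?case .
qed

lemma finite_lists_sum_list_eq: "finite {rs :: nat list. length rs = n \<and> sum_list rs = r}"
  by (rule finite_subset[OF _ finite_lists_length_eq[of "{..r}" n]])
     (auto dest: member_le_sum_list)

lemma sum_lists_sum_list_eq_Suc:
  fixes g :: "nat list \<Rightarrow> 'a::comm_monoid_add"
  shows "(\<Sum>rs | length rs = Suc n \<and> sum_list rs = r. g rs)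
       = (\<Sum>j\<le>r. \<Sum>rs | length rs = n \<and> sum_list rs = r - j. g (j # rs))"
proof -
  have "(\<Sum>rs | length rs = Suc n \<and> sum_list rs = r. g rs)
      = (\<Sum>jrs\<in>(SIGMA j:{..r}. {rs. length rs = n \<and> sum_list rs = r - j}). g (fst jrs # snd jrs))"
    by (rule sum.reindex_bij_witness[of _ "\<lambda>jrs. fst jrs # snd jrs" "\<lambda>rs. (hd rs, tl rs)"])
       (auto simp: length_Suc_conv)
  also have "\<dots> = (\<Sum>j\<le>r. \<Sum>rs | length rs = n \<and> sum_list rs = r - j. g (j # rs))"
    by (subst sum.Sigma) (auto simp: finite_lists_sum_list_eq split_def)
  finally show ?thesis .
qed

lemma hamming_walk_number_eq_multinomial_sum:
  "hamming_walk_number q es r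
     = (\<Sum>rs | length rs = length es \<and> sum_list rs = r.
          real (fact r) / (\<Prod>i<length es. real (fact (rs ! i)))
          * (\<Prod>i<length es. a_factor q (es ! i) (rs ! i)))"
proof (induction es arbitrary: r)
  case Nil
  have "{rs :: nat list. length rs = 0 \<and> sum_list rs = r} = (if r = 0 then {[]} else {})"
    by auto
  then show ?case by simp
next
  case (Cons e es)
  let ?n = "length es"
  have "(\<Sum>rs | length rs = length (e # es) \<and> sum_list rs = r.
          real (fact r) / (\<Prod>i<length (e # es). real (fact (rs ! i)))
          * (\<Prod>i<length (e # es). a_factor q ((e # es) ! i) (rs ! i)))
      = (\<Sum>j\<le>r. \<Sum>rs | length rs = ?n \<and> sum_list rs = r - j.
          real (fact r) / (real (fact j) * (\<Prod>i<?n. real (fact (rs ! i))))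
          * (a_factor q e j * (\<Prod>i<?n. a_factor q (es ! i) (rs ! i))))"
    by (simp only: length_Cons sum_lists_sum_list_eq_Suc prod.lessThan_Suc_shift)
       (simp del: of_nat_fact)
  also have "\<dots> = (\<Sum>j\<le>r. real (r choose j) * a_factor q e j * hamming_walk_number q es (r - j))"
  proof (intro sum.cong refl)
    fix j assume "j \<in> {..r}"
    then have "fact j * fact (r - j) * (r choose j) = fact r"
      by (simp add: binomial_fact_lemma)
    then have "real (fact r) = real (fact j) * real (r choose j) * real (fact (r - j))"
      by (metis mult.commute mult.assoc of_nat_mult)
    then show "(\<Sum>rs | length rs = ?n \<and> sum_list rs = r - j.
          real (fact r) / (real (fact j) * (\<Prod>i<?n. real (fact (rs ! i))))
          * (a_factor q e j * (\<Prod>i<?n. a_factor q (es ! i) (rs ! i))))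
        = real (r choose j) * a_factor q e j * hamming_walk_number q es (r - j)"
      unfolding Cons.IH[of "r - j"] sum_distrib_left
      by (intro sum.cong refl) (simp del: of_nat_fact)
  qed
  finally show ?case by simp
qed

lemma walk_count_hamming_eq_multinomial_sum:
  assumes "finite F" "card F = q" "q > 1"
    and xs: "xs \<in> hamming_vertices n F" and ys: "ys \<in> hamming_vertices n F"
  shows "real (walk_count (hamming_vertices n F) (hamming_adj n) r xs ys)
       = (\<Sum>rs | length rs = n \<and> sum_list rs = r.
            real (fact r) / (\<Prod>i<n. real (fact (rs ! i)))
            * (\<Prod>i<n. a_factor q (xs ! i = ys ! i) (rs ! i)))"
proof -
  have "length xs = n" "length ys = n"
    using xs ys by (simp_all add: hamming_vertices_def)
  then show ?thesis
    unfolding walk_count_hamming[OF assms] hamming_walk_number_eq_multinomial_sum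
    by (intro sum.cong refl arg_cong2[where f = "(*)"] prod.cong) simp_all
qed

section \<open>Finite fields\<close>

lemma nonzero_power_card_minus_one:
  fixes x :: "'a::{field,finite}"
  assumes "x \<noteq> 0"
  shows "x ^ (card (UNIV :: 'a set) - 1) = 1"
proof -
  have "x ^ (card (UNIV :: 'a set) - 1) * (\<Prod>y\<in>UNIV - {0}. y) = (\<Prod>y\<in>UNIV - {0}. x * y)"
    by (simp add: prod.distrib card_Diff_singleton)
  also have "\<dots> = (\<Prod>y\<in>UNIV - {0}. y)"
    by (rule prod.reindex_bij_witness[of _ "\<lambda>y. y / x" "\<lambda>y. x * y"]) (use assms in auto)
  finally show ?thesis by simp
qed

lemma CHAR_eq_prime_of_card:
  assumes "prime p" "card (UNIV :: 'a::{field,finite} set) = p ^ m"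
  shows "CHAR('a) = p"
proof -
  have "prime CHAR('a)" by (intro prime_CHAR_semidom finite_imp_CHAR_pos) simp
  moreover have "CHAR('a) dvd p ^ m" using CHAR_dvd_CARD[where 'a='a] assms(2) by simp
  ultimately show ?thesis using assms(1) by (metis prime_dvd_power primes_dvd_imp_eq)
qed

lemma primitive_element_power_eq_iff:
  fixes \<omega> :: "'a::{field,finite}"
  assumes "primitive_element \<omega>"
  shows "\<omega> ^ i = \<omega> ^ j \<longleftrightarrow> i mod (card (UNIV :: 'a set) - 1) = j mod (card (UNIV :: 'a set) - 1)"
proof -
  let ?N = "card (UNIV :: 'a set) - 1"
  have "\<omega> \<noteq> 0" using assms by (simp add: primitive_element_def)
  have "card {0, 1 :: 'a} \<le> card (UNIV :: 'a set)" by (rule card_mono) auto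
  then have "?N > 0" by simp
  have power_mod: "\<omega> ^ n = \<omega> ^ (n mod ?N)" for n
  proof -
    have "\<omega> ^ n = (\<omega> ^ ?N) ^ (n div ?N) * \<omega> ^ (n mod ?N)"
      by (simp flip: power_mult power_add)
    then show ?thesis using nonzero_power_card_minus_one[OF \<open>\<omega> \<noteq> 0\<close>] by simp
  qed
  have "(\<lambda>n. \<omega> ^ n) ` {..<?N} = UNIV - {0}"
  proof
    show "UNIV - {0} \<subseteq> (\<lambda>n. \<omega> ^ n) ` {..<?N}"
    proof
      fix x :: 'a assume "x \<in> UNIV - {0}"
      then obtain n where "x = \<omega> ^ (n mod ?N)"
        using assms power_mod by (auto simp: primitive_element_def)
      then show "x \<in> (\<lambda>n. \<omega> ^ n) ` {..<?N}" using \<open>?N > 0\<close> by auto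
    qed
  qed (use \<open>\<omega> \<noteq> 0\<close> in auto)
  then have "inj_on (\<lambda>n. \<omega> ^ n) {..<?N}"
    by (intro eq_card_imp_inj_on) (simp_all add: card_Diff_singleton)
  then have "\<omega> ^ (i mod ?N) = \<omega> ^ (j mod ?N) \<longleftrightarrow> i mod ?N = j mod ?N"
    using \<open>?N > 0\<close> by (intro inj_on_eq_iff) auto
  then show ?thesis by (metis power_mod)
qed

lemma subfield_q_diff:
  fixes c d :: "'a::field"
  assumes "prime CHAR('a)" "q = CHAR('a) ^ n" "c \<in> subfield_q q" "d \<in> subfield_q q"
  shows "c - d \<in> subfield_q q"
proof -
  have "c ^ q = (c - d) ^ q + d ^ q"
    using freshmans_dream'[OF assms(1,2), of "c - d" d] by simp
  then show ?thesis using assms(3,4) by (simp add: subfield_q_def eq_diff_eq)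
qed

lemma subfield_q_power_iterate: "c \<in> subfield_q q \<Longrightarrow> c ^ (q ^ t) = c"
  by (induction t) (simp_all add: subfield_q_def power_mult)

section \<open>The generalized Paley graph as a Hamming graph\<close>

locale paley_hamming =
  fixes p a b k q :: nat and \<omega> :: "'a::{field,finite}"
  assumes prime_p: "prime p" and a_pos: "a > 0" and b_pos: "b > 0" and q_def: "q = p ^ a"
    and card_field: "card (UNIV :: 'a set) = q ^ b"
    and card_minus_one: "q ^ b - 1 = k * b * (q - 1)"
    and primitive_divisor: "primitive_divisor p (a * b) (b * (q - 1))"
    and primitive: "primitive_element \<omega>"
begin

abbreviation F :: "'a set" where "F \<equiv> subfield_q q"
abbreviation \<beta> :: 'a where "\<beta> \<equiv> \<omega> ^ k"

lemma card_minus_one_eq: "card (UNIV :: 'a set) - 1 = k * b * (q - 1)"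
  using card_field card_minus_one by simp

lemma q_ge_2: "q \<ge> 2"
proof -
  have "p ^ 1 \<le> p ^ a" using a_pos prime_gt_1_nat[OF prime_p] by (intro power_increasing) auto
  then show ?thesis using prime_ge_2_nat[OF prime_p] q_def by simp
qed

lemma q_pos: "q > 0"
  using q_ge_2 by simp

lemma k_pos: "k > 0"
proof -
  have "card {0, 1 :: 'a} \<le> card (UNIV :: 'a set)" by (rule card_mono) auto
  then show ?thesis using card_minus_one_eq by (cases k) auto
qed

lemma CHAR_eq: "CHAR('a) = p"
  using CHAR_eq_prime_of_card[OF prime_p] card_field q_def by (simp flip: power_mult)

lemma omega_nonzero: "\<omega> \<noteq> 0"
  using primitive by (simp add: primitive_element_def)

lemma omega_power_eq_iff:
  "\<omega> ^ i = \<omega> ^ j \<longleftrightarrow> i mod (k * b * (q - 1)) = j mod (k * b * (q - 1))"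
  using primitive_element_power_eq_iff[OF primitive] by (simp only: card_minus_one_eq)

lemma omega_power_eq_1_iff: "\<omega> ^ n = 1 \<longleftrightarrow> k * b * (q - 1) dvd n"
  using omega_power_eq_iff[of n 0] by (simp add: mod_eq_0_iff_dvd)

lemma nonzero_in_subfield_iff: "c \<noteq> 0 \<Longrightarrow> c \<in> F \<longleftrightarrow> c ^ (q - 1) = 1"
  unfolding subfield_q_def mem_Collect_eq
  by (metis Suc_diff_1 q_pos power_Suc mult_cancel_left1)

lemma zero_in_subfield: "0 \<in> F"
  using q_pos by (simp add: subfield_q_def)

lemma subfield_diff: "c \<in> F \<Longrightarrow> d \<in> F \<Longrightarrow> c - d \<in> F"
  by (rule subfield_q_diff[where n = a]) (simp_all add: CHAR_eq prime_p q_def)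

lemma beta_power_in_subfield: "\<beta> ^ (b * s) \<in> F"
proof -
  have "\<omega> ^ (k * (b * s) * (q - 1)) = 1"
    unfolding omega_power_eq_1_iff by (simp add: ac_simps)
  then show ?thesis
    using omega_nonzero by (simp add: nonzero_in_subfield_iff flip: power_mult)
qed

lemma subfield_nonzero_imp_beta_power:
  assumes "c \<in> F" "c \<noteq> 0"
  obtains s where "s < q - 1" "c = \<beta> ^ (b * s)"
proof -
  obtain n where n: "c = \<omega> ^ n" using assms primitive by (auto simp: primitive_element_def)
  then have "\<omega> ^ (n * (q - 1)) = 1"
    using assms by (simp add: nonzero_in_subfield_iff power_mult)
  then have "k * b * (q - 1) dvd n * (q - 1)" by (simp add: omega_power_eq_1_iff)
  then have "k * b dvd n" using q_ge_2 by simp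
  then obtain s where s: "n = k * b * s" ..
  have "(k * b * s) mod (k * b * (q - 1)) = (k * b * (s mod (q - 1))) mod (k * b * (q - 1))"
    by (simp only: mult_mod_right mod_mod_trivial)
  then have "c = \<omega> ^ (k * b * (s mod (q - 1)))"
    unfolding n s by (simp add: omega_power_eq_iff)
  then have "c = \<beta> ^ (b * (s mod (q - 1)))"
    by (simp add: power_mult mult.assoc)
  moreover have "s mod (q - 1) < q - 1" using q_ge_2 by (intro mod_less_divisor) linarith
  ultimately show ?thesis using that by blast
qed

lemma subfield_eq: "F = insert 0 ((\<lambda>s. \<beta> ^ (b * s)) ` {..<q - 1})"
proof
  show "F \<subseteq> insert 0 ((\<lambda>s. \<beta> ^ (b * s)) ` {..<q - 1})"
    by (auto elim: subfield_nonzero_imp_beta_power)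
  show "insert 0 ((\<lambda>s. \<beta> ^ (b * s)) ` {..<q - 1}) \<subseteq> F"
    using q_pos beta_power_in_subfield by (auto simp: subfield_q_def)
qed

lemma card_subfield: "card F = q"
proof -
  have "inj_on (\<lambda>s. \<beta> ^ (b * s)) {..<q - 1}"
  proof (rule inj_onI)
    fix i j assume i: "i \<in> {..<q - 1}" and j: "j \<in> {..<q - 1}"
      and "\<beta> ^ (b * i) = \<beta> ^ (b * j)"
    then have "\<omega> ^ (k * b * i) = \<omega> ^ (k * b * j)"
      by (simp add: power_mult mult.assoc)
    then have "(k * b * i) mod (k * b * (q - 1)) = (k * b * j) mod (k * b * (q - 1))"
      by (simp only: omega_power_eq_iff)
    then have "k * b * (i mod (q - 1)) = k * b * (j mod (q - 1))"
      by (simp only: mult_mod_right)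
    then show "i = j" using k_pos b_pos i j by simp
  qed
  then show ?thesis
    unfolding subfield_eq using omega_nonzero q_ge_2
    by (subst card_insert_disjoint) (auto simp: card_image)
qed

lemma kth_powers_eq: "kth_powers k = {c * \<beta> ^ i | c i. c \<in> F \<and> c \<noteq> 0 \<and> i < b}"
proof
  show "kth_powers k \<subseteq> {c * \<beta> ^ i | c i. c \<in> F \<and> c \<noteq> 0 \<and> i < b}"
  proof
    fix y :: 'a assume "y \<in> kth_powers k"
    then obtain z where "y = z ^ k" "z \<noteq> 0" by (auto simp: kth_powers_def)
    moreover obtain n where "z = \<omega> ^ n"
      using \<open>z \<noteq> 0\<close> primitive by (auto simp: primitive_element_def)
    ultimately have "y = \<beta> ^ n"
      by (simp add: mult.commute[of n] flip: power_mult)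
    also have "\<dots> = \<beta> ^ (b * (n div b)) * \<beta> ^ (n mod b)"
      by (simp flip: power_add)
    finally have "y = \<beta> ^ (b * (n div b)) * \<beta> ^ (n mod b)" .
    then show "y \<in> {c * \<beta> ^ i | c i. c \<in> F \<and> c \<noteq> 0 \<and> i < b}"
      using beta_power_in_subfield omega_nonzero b_pos by fastforce
  qed
  show "{c * \<beta> ^ i | c i. c \<in> F \<and> c \<noteq> 0 \<and> i < b} \<subseteq> kth_powers k"
  proof clarify
    fix c :: 'a and i assume "c \<in> F" "c \<noteq> 0"
    then obtain s where "c = \<beta> ^ (b * s)" by (rule subfield_nonzero_imp_beta_power)
    then have "c * \<beta> ^ i = (\<omega> ^ (b * s + i)) ^ k"
      by (simp add: power_add power_mult_distrib ac_simps flip: power_mult)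
    then show "c * \<beta> ^ i \<in> kth_powers k"
      using omega_nonzero by (auto simp: kth_powers_def)
  qed
qed

lemma coprime_order_p: "coprime (b * (q - 1)) p"
proof -
  have "b * (q - 1) dvd p ^ (a * b) - 1"
    using primitive_divisor by (simp add: primitive_divisor_def)
  moreover have "p dvd p ^ (a * b)"
    using a_pos b_pos by (simp add: dvd_power)
  moreover have "coprime (p ^ (a * b) - 1) (p ^ (a * b))"
    using prime_gt_0_nat[OF prime_p] by (intro coprime_diff_one_left_nat) simp
  ultimately show ?thesis by (rule coprime_divisors)
qed

lemma frobenius_conjugates_distinct: "inj_on (\<lambda>t. \<beta> ^ (q ^ t)) {..<b}"
proof (rule linorder_inj_onI')
  fix s t assume "s \<in> {..<b}" "t \<in> {..<b}" "s < t"
  show "\<beta> ^ (q ^ s) \<noteq> \<beta> ^ (q ^ t)"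
  proof
    assume "\<beta> ^ (q ^ s) = \<beta> ^ (q ^ t)"
    then have "\<omega> ^ (k * q ^ t) = \<omega> ^ (k * q ^ s)"
      by (simp add: power_mult)
    then have "(k * q ^ t) mod (k * b * (q - 1)) = (k * q ^ s) mod (k * b * (q - 1))"
      by (simp only: omega_power_eq_iff)
    moreover have "k * q ^ s \<le> k * q ^ t"
      using \<open>s < t\<close> q_pos by (simp add: power_increasing)
    ultimately have "k * (b * (q - 1)) dvd k * (q ^ s * (q ^ (t - s) - 1))"
      using \<open>s < t\<close>
      by (simp add: mod_eq_dvd_iff_nat diff_mult_distrib2 mult.assoc flip: power_add)
    then have "b * (q - 1) dvd q ^ s * (q ^ (t - s) - 1)"
      using k_pos by simp
    then have "b * (q - 1) dvd p ^ (a * (t - s)) - 1"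
      using coprime_order_p q_def by (simp add: coprime_dvd_mult_right_iff power_mult)
    moreover have "1 \<le> a * (t - s)" "a * (t - s) < a * b"
      using a_pos \<open>s < t\<close> \<open>t \<in> {..<b}\<close> by auto
    ultimately show False
      using primitive_divisor by (auto simp: primitive_divisor_def)
  qed
qed

text \<open>Raising a relation \<open>\<Sum>j<b. d\<^sub>j \<beta>\<^sup>j = 0\<close> with coefficients in \<open>F\<close> to the power \<open>q\<^sup>t\<close>
  makes every conjugate \<open>\<beta>\<^bsup>q\<^sup>t\<^esup>\<close> a root of \<open>\<Sum>j<b. d\<^sub>j X\<^sup>j\<close>.\<close>
lemma beta_powers_independent:
  assumes "\<forall>j<b. d j \<in> F" and "(\<Sum>j<b. d j * \<beta> ^ j) = 0" and "j < b"
  shows "d j = 0"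
proof (rule ccontr)
  assume "d j \<noteq> 0"
  define P where "P = (\<Sum>j<b. monom (d j) j)"
  have coeff_P: "coeff P i = (if i < b then d i else 0)" for i
    unfolding P_def coeff_sum by (simp add: coeff_monom)
  have "P \<noteq> 0" using coeff_P[of j] \<open>j < b\<close> \<open>d j \<noteq> 0\<close> by auto
  have "degree P < b"
    using b_pos by (intro degree_lessI) (auto simp: coeff_P \<open>P \<noteq> 0\<close>)
  have "poly P (\<beta> ^ (q ^ t)) = 0" for t
  proof -
    have "d i ^ (q ^ t) = d i" if "i < b" for i
      using assms(1) subfield_q_power_iterate that by blast
    then have "poly P (\<beta> ^ (q ^ t)) = (\<Sum>j<b. (d j * \<beta> ^ j) ^ (q ^ t))"
      unfolding P_def poly_sum poly_monom
      by (intro sum.cong refl) (simp add: power_mult_distrib ac_simps flip: power_mult)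
    also have "\<dots> = (\<Sum>j<b. d j * \<beta> ^ j) ^ (q ^ t)"
      by (rule freshmans_dream_sum'[symmetric, where n = "a * t"])
       (simp_all add: CHAR_eq prime_p q_def power_mult)
    finally show ?thesis using assms(2) q_pos by simp
  qed
  then have "(\<lambda>t. \<beta> ^ (q ^ t)) ` {..<b} \<subseteq> {x. poly P x = 0}" by auto
  then have "card ((\<lambda>t. \<beta> ^ (q ^ t)) ` {..<b}) \<le> degree P"
    using card_mono[OF poly_roots_finite[OF \<open>P \<noteq> 0\<close>]] card_poly_roots_bound[OF \<open>P \<noteq> 0\<close>]
    by (meson le_trans)
  then show False
    using \<open>degree P < b\<close> frobenius_conjugates_distinct by (simp add: card_image)
qed

lemma sum_beta_powers_eq_iff:
  assumes "\<forall>j<b. d j \<in> F" "\<forall>j<b. e j \<in> F"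
  shows "(\<Sum>j<b. d j * \<beta> ^ j) = (\<Sum>j<b. e j * \<beta> ^ j) \<longleftrightarrow> (\<forall>j<b. d j = e j)"
proof
  assume "(\<Sum>j<b. d j * \<beta> ^ j) = (\<Sum>j<b. e j * \<beta> ^ j)"
  then have "(\<Sum>j<b. (d j - e j) * \<beta> ^ j) = 0"
    by (simp add: left_diff_distrib sum_subtractf)
  moreover have "\<forall>j<b. d j - e j \<in> F"
    using assms by (simp add: subfield_diff)
  ultimately have "d j - e j = 0" if "j < b" for j
    using beta_powers_independent[of "\<lambda>j. d j - e j"] that by blast
  then show "\<forall>j<b. d j = e j" by simp
next
  assume "\<forall>j<b. d j = e j"
  then show "(\<Sum>j<b. d j * \<beta> ^ j) = (\<Sum>j<b. e j * \<beta> ^ j)"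
    by (intro sum.cong) auto
qed

definition from_coords :: "'a list \<Rightarrow> 'a" where
  "from_coords cs = (\<Sum>i<b. cs ! i * \<omega> ^ (i * k))"

lemma from_coords_eq: "from_coords cs = (\<Sum>i<b. cs ! i * \<beta> ^ i)"
  by (simp add: from_coords_def mult.commute flip: power_mult)

lemma inj_on_from_coords: "inj_on from_coords (hamming_vertices b F)"
proof (rule inj_onI)
  fix cs ds assume "cs \<in> hamming_vertices b F" "ds \<in> hamming_vertices b F"
    and "from_coords cs = from_coords ds"
  moreover from this have "\<forall>j<b. cs ! j = ds ! j"
    by (simp add: from_coords_eq sum_beta_powers_eq_iff hamming_vertices_nth)
  ultimately show "cs = ds"
    by (auto simp: hamming_vertices_def intro: nth_equalityI)
qed

lemma bij_betw_from_coords: "bij_betw from_coords (hamming_vertices b F) UNIV"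
proof -
  have "card (from_coords ` hamming_vertices b F) = card (UNIV :: 'a set)"
    using inj_on_from_coords
    by (simp add: card_image card_hamming_vertices card_subfield card_field)
  then have "from_coords ` hamming_vertices b F = UNIV"
    by (intro card_eq_UNIV_imp_eq_UNIV) simp_all
  then show ?thesis
    using inj_on_from_coords by (simp add: bij_betw_def)
qed

lemma coords_from_coords:
  assumes "cs \<in> hamming_vertices b F"
  shows "coords q b k \<omega> (from_coords cs) = cs"
  unfolding coords_def
proof (rule the_equality)
  fix ds assume "length ds = b \<and> set ds \<subseteq> F \<and> from_coords cs = (\<Sum>i<b. ds ! i * \<omega> ^ (i * k))"
  then have "ds \<in> hamming_vertices b F" "from_coords ds = from_coords cs"
    by (auto simp: hamming_vertices_def from_coords_def)
  then show "ds = cs" using assms inj_on_from_coords by (auto dest: inj_onD)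
qed (use assms in \<open>auto simp: hamming_vertices_def from_coords_def\<close>)

lemma coords_in_hamming_vertices: "coords q b k \<omega> x \<in> hamming_vertices b F"
  and from_coords_coords: "from_coords (coords q b k \<omega> x) = x"
proof -
  obtain cs where "cs \<in> hamming_vertices b F" "x = from_coords cs"
    using bij_betw_from_coords by (metis bij_betw_iff_bijections iso_tuple_UNIV_I)
  then show "coords q b k \<omega> x \<in> hamming_vertices b F" "from_coords (coords q b k \<omega> x) = x"
    by (simp_all add: coords_from_coords)
qed

lemma bij_betw_coords: "bij_betw (coords q b k \<omega>) UNIV (hamming_vertices b F)"
  by (rule bij_betw_byWitness[where f' = from_coords])
     (use coords_from_coords from_coords_coords coords_in_hamming_vertices in blast)+

lemma from_coords_diff_eq_iff:
  assumes "cs \<in> hamming_vertices b F" "ds \<in> hamming_vertices b F" "c \<in> F" "i < b"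
  shows "from_coords ds - from_coords cs = c * \<beta> ^ i \<longleftrightarrow>
           (\<forall>j<b. ds ! j - cs ! j = (if j = i then c else 0))"
proof -
  have "from_coords ds - from_coords cs = (\<Sum>j<b. (ds ! j - cs ! j) * \<beta> ^ j)"
    by (simp add: from_coords_eq left_diff_distrib sum_subtractf)
  moreover have "c * \<beta> ^ i = (\<Sum>j<b. (if j = i then c else 0) * \<beta> ^ j)"
  proof -
    have "(\<Sum>j<b. (if j = i then c else 0) * \<beta> ^ j) = (\<Sum>j<b. if j = i then c * \<beta> ^ j else 0)"
      by (intro sum.cong) simp_all
    then show ?thesis using \<open>i < b\<close> by simp
  qed
  moreover have "\<forall>j<b. ds ! j - cs ! j \<in> F" "\<forall>j<b. (if j = i then c else 0) \<in> F"
    using assms by (simp_all add: subfield_diff hamming_vertices_nth zero_in_subfield)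
  ultimately show ?thesis by (simp add: sum_beta_powers_eq_iff)
qed

lemma hamming_adj_coords_iff:
  "hamming_adj b (coords q b k \<omega> x) (coords q b k \<omega> y) \<longleftrightarrow> paley_adj k x y"
proof -
  define cx cy where "cx = coords q b k \<omega> x" and "cy = coords q b k \<omega> y"
  have cx: "cx \<in> hamming_vertices b F" and cy: "cy \<in> hamming_vertices b F"
    unfolding cx_def cy_def by (rule coords_in_hamming_vertices)+
  have "paley_adj k x y \<longleftrightarrow> (\<exists>c i. c \<in> F \<and> c \<noteq> 0 \<and> i < b \<and> y - x = c * \<beta> ^ i)"
    by (auto simp: paley_adj_def kth_powers_eq)
  also have "\<dots> \<longleftrightarrow> (\<exists>c i. c \<in> F \<and> c \<noteq> 0 \<and> i < b \<and>
                        (\<forall>j<b. cy ! j - cx ! j = (if j = i then c else 0)))"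
  proof -
    have "y - x = c * \<beta> ^ i \<longleftrightarrow> (\<forall>j<b. cy ! j - cx ! j = (if j = i then c else 0))"
      if "c \<in> F" "i < b" for c i
      using from_coords_diff_eq_iff[OF cx cy that] by (simp add: cx_def cy_def from_coords_coords)
    then show ?thesis by blast
  qed
  also have "\<dots> \<longleftrightarrow> (\<exists>i<b. \<exists>c\<noteq>0. \<forall>j<b. cy ! j - cx ! j = (if j = i then c else 0))"
  proof
    assume "\<exists>i<b. \<exists>c\<noteq>0. \<forall>j<b. cy ! j - cx ! j = (if j = i then c else 0)"
    then obtain i c where "i < b" "c \<noteq> 0" and diff: "\<forall>j<b. cy ! j - cx ! j = (if j = i then c else 0)"
      by blast
    moreover have "c \<in> F"
      using diff[rule_format, OF \<open>i < b\<close>] cx cy \<open>i < b\<close>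
      by (metis subfield_diff hamming_vertices_nth)
    ultimately show "\<exists>c i. c \<in> F \<and> c \<noteq> 0 \<and> i < b \<and>
                        (\<forall>j<b. cy ! j - cx ! j = (if j = i then c else 0))"
      by blast
  qed blast
  also have "\<dots> \<longleftrightarrow> hamming_adj b cx cy"
    using cx cy
    by (intro hamming_adj_iff_single_difference[symmetric]) (simp_all add: hamming_vertices_def)
  finally show ?thesis unfolding cx_def cy_def by blast
qed

end

theorem proposition4p2:
  fixes p m k a b u :: nat and \<omega> x y :: "'a::{field,finite}" and r :: nat
  assumes "prime p" and "m > 0" and "k > 0" and "k dvd p ^ m - 1"
    and "card (UNIV :: 'a set) = p ^ m"
    and "u = (p ^ m - 1) div k"
    and "primitive_divisor p m u"
    and "a \<ge> 1" and "b > 1" and "u = b * (p ^ a - 1)" and "m = a * b"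
    and "primitive_element \<omega>"
  shows "real (walk_count UNIV (paley_adj k) r x y)
           = real (walk_count (hamming_vertices b (subfield_q (p ^ a))) (hamming_adj b) r
                     (coords (p ^ a) b k \<omega> x) (coords (p ^ a) b k \<omega> y))
       \<and> real (walk_count (hamming_vertices b (subfield_q (p ^ a))) (hamming_adj b) r
                     (coords (p ^ a) b k \<omega> x) (coords (p ^ a) b k \<omega> y))
           = (\<Sum>rs \<in> {rs :: nat list. length rs = b \<and> sum_list rs = r}.
                real (fact r) / (\<Prod>i<b. real (fact (rs ! i)))
                * (\<Prod>i<b. a_factor (p ^ a)
                      (coords (p ^ a) b k \<omega> x ! i = coords (p ^ a) b k \<omega> y ! i) (rs ! i)))"
proof -
  have "p ^ m - 1 = k * u"
    using assms(4,6) by simp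
  then have "(p ^ a) ^ b - 1 = k * b * (p ^ a - 1)"
    using assms(10,11) by (simp add: mult.assoc flip: power_mult)
  then interpret paley_hamming p a b k "p ^ a" \<omega>
    using assms by unfold_locales (simp_all flip: power_mult)
  have isomorphic: "walk_count (hamming_vertices b F) (hamming_adj b) r
          (coords (p ^ a) b k \<omega> x) (coords (p ^ a) b k \<omega> y)
      = walk_count UNIV (paley_adj k) r x y"
    by (rule walk_count_bij_betw[OF _ bij_betw_coords]) (simp_all add: hamming_adj_coords_iff)
  have "real (walk_count (hamming_vertices b F) (hamming_adj b) r
          (coords (p ^ a) b k \<omega> x) (coords (p ^ a) b k \<omega> y))
      = (\<Sum>rs | length rs = b \<and> sum_list rs = r.
            real (fact r) / (\<Prod>i<b. real (fact (rs ! i)))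
            * (\<Prod>i<b. a_factor (p ^ a)
                  (coords (p ^ a) b k \<omega> x ! i = coords (p ^ a) b k \<omega> y ! i) (rs ! i)))"
    using q_ge_2 card_subfield coords_in_hamming_vertices
    by (intro walk_count_hamming_eq_multinomial_sum) auto
  then show ?thesis by (simp add: isomorphic)
qed

end
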